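(* Let $n\ge 1$, $d\ge 2$ and $1\le k\le n$ be integers, and let $R=n-k\lfloor n/k\rfloor$. For every $k$-separable state $\rho$ on $(\mathbb{C}^d)^{\otimes n}$, the full-body correlation tensor satisfies $$\|\tau(\rho)\|\le \sqrt{(d^2-1)^{k}\,\big(d^{\lceil n/k\rceil-2}\big)^{R}\,\big(d^{\lfloor n/k\rfloor-2}\big)^{k-R}}.$$
   Context: Consider $n$ qudits with Hilbert space $(\mathbb{C}^d)^{\otimes n}$. Let $\lambda_0=\mathbb{1}_d$ and let $\lambda_1,\dots,\lambda_{d^2-1}$ be Hermitian traceless $d\times d$ matrices (generators of $SU(d)$) normalized so that $\mathrm{Tr}[\lambda_i\lambda_j]=d\,\delta_{ij}$ for all $i,j\in\{0,\dots,d^2-1\}$. For a nonempty subset $\alpha\subseteq\{1,\dots,n\}$ and a state $\rho$, let $\rho_\alpha$ be the reduced state on the parties in $\alpha$ and define $\|\tau_\alpha(\rho)\|^2=\sum_{(i_k)_{k\in\alpha}\in\{1,\dots,d^2-1\}^{\alpha}}\big(\mathrm{Tr}[\rho_\alpha\bigotimes_{k\in\alpha}\lambda_{i_k}]\big)^2$. The full-body correlation tensor norm is $\|\tau(\rho)\|:=\|\tau_{\{1,\dots,n\}}(\rho)\|$. A pure state is $k$-separable if it is a tensor product of $k$ pure states on the $k$ blocks of some partition of $\{1,\dots,n\}$ into $k$ nonempty blocks; a (mixed) state is $k$-separable if it is a convex combination of $k$-separable pure states (the partitions may differ between terms). *)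

theory Defs
  imports "HOL-Analysis.Analysis" "HOL-Library.Disjoint_Sets"
begin

text \<open>Computational basis labels of the qudits in a set B of parties:
  functions assigning a level in {0..<d} to each party in B.\<close>
definition configs :: "nat set \<Rightarrow> nat \<Rightarrow> (nat \<Rightarrow> nat) set" where
  "configs B d = PiE B (\<lambda>_. {0..<d})"

text \<open>Operators on (C^d)^{tensor n} are matrices indexed by configs {0..<n} d.
  A family of d x d matrices: lam i a b (entries for a, b < d).\<close>
definition generators :: "nat \<Rightarrow> (nat \<Rightarrow> nat \<Rightarrow> nat \<Rightarrow> complex) \<Rightarrow> bool" where
  "generators d lam \<longleftrightarrow>
     (\<forall>a<d. \<forall>b<d. lam 0 a b = (if a = b then 1 else 0)) \<and>
     (\<forall>i<d^2. \<forall>a<d. \<forall>b<d. lam i b a = cnj (lam i a b)) \<and>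
     (\<forall>i\<in>{1..<d^2}. (\<Sum>a<d. lam i a a) = 0) \<and>
     (\<forall>i<d^2. \<forall>j<d^2. (\<Sum>a<d. \<Sum>b<d. lam i a b * lam j b a)
                        = (if i = j then of_nat d else 0))"

definition corr :: "nat \<Rightarrow> nat \<Rightarrow> (nat \<Rightarrow> nat \<Rightarrow> nat \<Rightarrow> complex)
    \<Rightarrow> ((nat \<Rightarrow> nat) \<Rightarrow> (nat \<Rightarrow> nat) \<Rightarrow> complex) \<Rightarrow> (nat \<Rightarrow> nat) \<Rightarrow> complex" where
  "corr n d lam rho idx =
     (\<Sum>x\<in>configs {0..<n} d. \<Sum>y\<in>configs {0..<n} d.
        rho x y * (\<Prod>k<n. lam (idx k) (y k) (x k)))"

definition tau_sq :: "nat \<Rightarrow> nat \<Rightarrow> (nat \<Rightarrow> nat \<Rightarrow> nat \<Rightarrow> complex)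
    \<Rightarrow> ((nat \<Rightarrow> nat) \<Rightarrow> (nat \<Rightarrow> nat) \<Rightarrow> complex) \<Rightarrow> real" where
  "tau_sq n d lam rho =
     (\<Sum>idx\<in>PiE {0..<n} (\<lambda>_. {1..<d^2}). (cmod (corr n d lam rho idx))^2)"

definition unit_state :: "nat set \<Rightarrow> nat \<Rightarrow> ((nat \<Rightarrow> nat) \<Rightarrow> complex) \<Rightarrow> bool" where
  "unit_state B d psi \<longleftrightarrow> (\<Sum>x\<in>configs B d. (cmod (psi x))^2) = 1"

definition pure_k_separable :: "nat \<Rightarrow> nat \<Rightarrow> nat \<Rightarrow> ((nat \<Rightarrow> nat) \<Rightarrow> complex) \<Rightarrow> bool" where
  "pure_k_separable n d k psi \<longleftrightarrow> unit_state {0..<n} d psi \<and>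
     (\<exists>P phi. partition_on {0..<n} P \<and> card P = k \<and>
        (\<forall>B\<in>P. unit_state B d (phi B)) \<and>
        (\<forall>x\<in>configs {0..<n} d. psi x = (\<Prod>B\<in>P. phi B (restrict x B))))"

definition k_separable :: "nat \<Rightarrow> nat \<Rightarrow> nat \<Rightarrow> ((nat \<Rightarrow> nat) \<Rightarrow> (nat \<Rightarrow> nat) \<Rightarrow> complex) \<Rightarrow> bool" where
  "k_separable n d k rho \<longleftrightarrow>
     (\<exists>(m::nat) p psi. (\<forall>j<m. p j \<ge> (0::real) \<and> pure_k_separable n d k (psi j)) \<and> (\<Sum>j<m. p j) = 1 \<and>
        (\<forall>x\<in>configs {0..<n} d. \<forall>y\<in>configs {0..<n} d.
           rho x y = (\<Sum>j<m. complex_of_real (p j) * psi j x * cnj (psi j y))))"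

end

theory Submission
  imports Defs "Jordan_Normal_Form.Determinant"
begin

text \<open>Expanded in the product basis of generators, the sum of the squared correlation
  coefficients of an operator on a block B of qudits is d^|B| times its squared
  Hilbert-Schmidt norm (Parseval). For a pure state on B this total is d^|B|. The
  coefficients carrying the identity at one fixed site p sum to d^(|B|-1) times the purity
  of the state reduced to B - {p}, which is at least 1/d; hence the full-body coefficients
  have squared sum at most (1 - 1/d^2) d^|B|. For a product of k block states the
  full-body coefficients factor over the blocks, giving (1 - 1/d^2)^k d^n, and the squared
  modulus of a coefficient is convex in the state. The bound of the theorem equals
  (d^2 - 1)^k d^(n - 2k), independently of how the n qudits are split into blocks.\<close>

lemma sum_PiE_insert:
  assumes "x \<notin> S"
  shows "(\<Sum>g\<in>PiE (insert x S) T. f g) = (\<Sum>y\<in>T x. \<Sum>g\<in>PiE S T. f (g(x := y)))"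
proof -
  have "(\<Sum>g\<in>PiE (insert x S) T. f g) = (\<Sum>(y, g)\<in>T x \<times> PiE S T. f (g(x := y)))"
    unfolding PiE_insert_eq by (subst sum.reindex[OF inj_combinator[OF assms]]) (simp add: case_prod_unfold)
  then show ?thesis
    by (simp add: sum.cartesian_product)
qed

lemma sum_PiE_Un:
  assumes "A \<inter> C = {}"
  shows "(\<Sum>g\<in>PiE (A \<union> C) T. f g) = (\<Sum>a\<in>PiE A T. \<Sum>c\<in>PiE C T. f (merge A C (a, c)))"
proof -
  have "(\<Sum>g\<in>PiE (A \<union> C) T. f g) = (\<Sum>(a, c)\<in>PiE A T \<times> PiE C T. f (merge A C (a, c)))"
    using assms
    by (intro sum.reindex_bij_witness[of _ "\<lambda>(a, c). merge A C (a, c)" "\<lambda>g. (restrict g A, restrict g C)"])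
       (auto simp: PiE_iff)
  then show ?thesis
    by (simp add: sum.cartesian_product)
qed

lemma sum_PiE_prod_restrict:
  fixes g :: "'a set \<Rightarrow> ('a \<Rightarrow> 'b) \<Rightarrow> 'c::comm_semiring_1"
  assumes "finite P" "disjoint P"
  shows "(\<Sum>x\<in>PiE (\<Union>P) T. \<Prod>B\<in>P. g B (restrict x B)) = (\<Prod>B\<in>P. \<Sum>x\<in>PiE B T. g B x)"
  using assms
proof (induction P rule: finite_induct)
  case empty
  then show ?case by simp
next
  case (insert B0 P)
  have disj: "B0 \<inter> \<Union>P = {}"
    using insert.hyps(2) insert.prems by (auto simp: disjoint_def)
  have "(\<Sum>x\<in>PiE (\<Union>(insert B0 P)) T. \<Prod>B\<in>insert B0 P. g B (restrict x B))
      = (\<Sum>a\<in>PiE B0 T. \<Sum>c\<in>PiE (\<Union>P) T. g B0 a * (\<Prod>B\<in>P. g B (restrict c B)))"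
  proof -
    have "restrict (merge B0 (\<Union>P) (a, c)) B = restrict c B" if "B \<in> P" "c \<in> PiE (\<Union>P) T" for a c B
      using that disj by (auto simp: merge_def restrict_def fun_eq_iff)
    then show ?thesis
      unfolding Union_insert sum_PiE_Un[OF disj] using insert.hyps disj
      by (intro sum.cong refl) simp
  qed
  also have "\<dots> = (\<Sum>a\<in>PiE B0 T. g B0 a) * (\<Sum>c\<in>PiE (\<Union>P) T. \<Prod>B\<in>P. g B (restrict c B))"
    by (simp add: sum_product)
  also have "\<dots> = (\<Prod>B\<in>insert B0 P. \<Sum>x\<in>PiE B T. g B x)"
    using insert.prems unfolding pairwise_insert prod.insert[OF insert.hyps] by (simp add: insert.IH)
  finally show ?case .
qed

lemma mult_add_less_square:
  fixes a b d :: nat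
  assumes "a < d" "b < d"
  shows "a * d + b < d * d"
proof -
  have "a * d + b < (a + 1) * d" using assms by simp
  also have "\<dots> \<le> d * d" using assms by (intro mult_le_mono1) simp
  finally show ?thesis .
qed

lemma sum_lessThan_mult_div_mod:
  assumes "0 < (d::nat)"
  shows "(\<Sum>q<d * d. f (q div d) (q mod d)) = (\<Sum>a<d. \<Sum>b<d. f a b)"
proof -
  have "(\<Sum>q<d * d. f (q div d) (q mod d)) = (\<Sum>(a, b)\<in>{..<d} \<times> {..<d}. f a b)"
    using assms
    by (intro sum.reindex_bij_witness[of _ "\<lambda>(a, b). a * d + b" "\<lambda>q. (q div d, q mod d)"])
       (auto simp: less_mult_imp_div_less mult_add_less_square)
  then show ?thesis
    by (simp add: sum.cartesian_product)
qed

lemma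
  assumes "generators d lam"
  shows generators_identity: "a < d \<Longrightarrow> b < d \<Longrightarrow> lam 0 a b = (if a = b then 1 else 0)"
    and generators_hermitian: "i < d^2 \<Longrightarrow> a < d \<Longrightarrow> b < d \<Longrightarrow> lam i b a = cnj (lam i a b)"
    and generators_trace_orthogonal: "i < d^2 \<Longrightarrow> j < d^2 \<Longrightarrow>
      (\<Sum>a<d. \<Sum>b<d. lam i a b * lam j b a) = (if i = j then of_nat d else 0)"
  using assms unfolding generators_def by blast+

lemma generators_orthogonal:
  assumes g: "generators d lam" and "i < d^2" "j < d^2"
  shows "(\<Sum>a<d. \<Sum>b<d. lam i a b * cnj (lam j a b)) = (if i = j then of_nat d else 0)"
  using assms by (simp add: generators_hermitian[OF g, symmetric] generators_trace_orthogonal[OF g])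

text \<open>The d^2 generators, read as vectors of length d^2, form an orthogonal basis, so the
  square matrix U with rows lam i and the matrix V = U^*/d satisfy U V = 1; hence also V U = 1,
  which is the completeness relation.\<close>
lemma generators_complete:
  assumes g: "generators d lam" and "a < d" "b < d" "a' < d" "b' < d"
  shows "(\<Sum>i<d^2. lam i a b * cnj (lam i a' b')) = (if a = a' \<and> b = b' then of_nat d else 0)"
proof -
  have d: "0 < d" using assms by simp
  define N where "N = d * d"
  define U :: "complex mat" where "U = mat N N (\<lambda>(i, q). lam i (q div d) (q mod d))"
  define V :: "complex mat" where "V = mat N N (\<lambda>(q, j). cnj (lam j (q div d) (q mod d)) / of_nat d)"
  have U: "U \<in> carrier_mat N N" and V: "V \<in> carrier_mat N N"
    unfolding U_def V_def by auto
  have "U * V = 1\<^sub>m N"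
  proof (rule eq_matI)
    fix i j assume ij: "i < dim_row (1\<^sub>m N)" "j < dim_col (1\<^sub>m N)"
    then have "i < d^2" "j < d^2" by (auto simp: N_def power2_eq_square)
    have "(U * V) $$ (i, j) = (\<Sum>q<N. lam i (q div d) (q mod d) * (cnj (lam j (q div d) (q mod d)) / of_nat d))"
      using ij unfolding U_def V_def by (auto simp: scalar_prod_def lessThan_atLeast0 intro!: sum.cong)
    also have "\<dots> = (\<Sum>a<d. \<Sum>b<d. lam i a b * cnj (lam j a b)) / of_nat d"
      unfolding N_def by (subst sum_lessThan_mult_div_mod[OF d]) (simp add: sum_divide_distrib)
    also have "\<dots> = 1\<^sub>m N $$ (i, j)"
      using generators_orthogonal[OF g \<open>i < d^2\<close> \<open>j < d^2\<close>] ij d by auto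
    finally show "(U * V) $$ (i, j) = 1\<^sub>m N $$ (i, j)" .
  qed (auto simp: U_def V_def)
  then have VU: "V * U = 1\<^sub>m N"
    using mat_mult_left_right_inverse[OF U V] by blast
  define q where "q = a * d + b"
  define q' where "q' = a' * d + b'"
  have q: "q < N" "q div d = a" "q mod d = b" and q': "q' < N" "q' div d = a'" "q' mod d = b'"
    using assms mult_add_less_square unfolding q_def q'_def N_def by auto
  have "(V * U) $$ (q', q) = (\<Sum>i<N. cnj (lam i a' b') / of_nat d * lam i a b)"
    using q q' unfolding U_def V_def by (auto simp: scalar_prod_def lessThan_atLeast0 intro!: sum.cong)
  then have "(\<Sum>i<d^2. lam i a b * cnj (lam i a' b')) = of_nat d * (V * U) $$ (q', q)"
    using d by (simp add: N_def power2_eq_square sum_distrib_left mult.commute)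
  also have "\<dots> = (if a = a' \<and> b = b' then of_nat d else 0)"
  proof -
    have "q' = q \<longleftrightarrow> a = a' \<and> b = b'"
      using q q' by (metis q_def q'_def)
    then show ?thesis
      using q q' unfolding VU by auto
  qed
  finally show ?thesis .
qed

lemma sum_norm_sq_orthogonal_transform:
  fixes L :: "'i \<Rightarrow> 'x \<Rightarrow> complex" and A :: "'x \<Rightarrow> complex"
  assumes "finite I" "finite X"
    and orth: "\<And>u v. u \<in> X \<Longrightarrow> v \<in> X \<Longrightarrow> (\<Sum>i\<in>I. L i u * cnj (L i v)) = (if u = v then of_real c else 0)"
  shows "(\<Sum>i\<in>I. (cmod (\<Sum>u\<in>X. A u * L i u))^2) = c * (\<Sum>u\<in>X. (cmod (A u))^2)"
proof -
  have "complex_of_real (\<Sum>i\<in>I. (cmod (\<Sum>u\<in>X. A u * L i u))^2)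
      = (\<Sum>i\<in>I. \<Sum>u\<in>X. \<Sum>v\<in>X. A u * cnj (A v) * (L i u * cnj (L i v)))"
    by (simp only: of_real_sum complex_norm_square) (simp add: sum_product mult_ac)
  also have "\<dots> = (\<Sum>u\<in>X. \<Sum>v\<in>X. A u * cnj (A v) * (\<Sum>i\<in>I. L i u * cnj (L i v)))"
    by (simp add: sum_distrib_left sum.swap[of _ I])
  also have "\<dots> = (\<Sum>u\<in>X. A u * cnj (A u) * of_real c)"
    using assms(2) by (intro sum.cong refl) (simp add: orth if_distrib sum.delta cong: if_cong)
  also have "\<dots> = complex_of_real (c * (\<Sum>u\<in>X. (cmod (A u))^2))"
    by (simp only: of_real_mult of_real_sum complex_norm_square) (simp add: sum_distrib_left mult_ac)
  finally show ?thesis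
    by (simp only: of_real_eq_iff)
qed

definition block_corr :: "nat set \<Rightarrow> nat \<Rightarrow> (nat \<Rightarrow> nat \<Rightarrow> nat \<Rightarrow> complex)
    \<Rightarrow> ((nat \<Rightarrow> nat) \<Rightarrow> (nat \<Rightarrow> nat) \<Rightarrow> complex) \<Rightarrow> (nat \<Rightarrow> nat) \<Rightarrow> complex" where
  "block_corr B d lam A idx =
     (\<Sum>x\<in>configs B d. \<Sum>y\<in>configs B d. A x y * (\<Prod>k\<in>B. lam (idx k) (y k) (x k)))"

definition hs_norm_sq :: "nat set \<Rightarrow> nat \<Rightarrow> ((nat \<Rightarrow> nat) \<Rightarrow> (nat \<Rightarrow> nat) \<Rightarrow> complex) \<Rightarrow> real" where
  "hs_norm_sq B d A = (\<Sum>x\<in>configs B d. \<Sum>y\<in>configs B d. (cmod (A x y))^2)"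

definition ketbra :: "((nat \<Rightarrow> nat) \<Rightarrow> complex) \<Rightarrow> (nat \<Rightarrow> nat) \<Rightarrow> (nat \<Rightarrow> nat) \<Rightarrow> complex" where
  "ketbra psi x y = psi x * cnj (psi y)"

definition ptrace :: "nat \<Rightarrow> nat \<Rightarrow> ((nat \<Rightarrow> nat) \<Rightarrow> (nat \<Rightarrow> nat) \<Rightarrow> complex)
    \<Rightarrow> (nat \<Rightarrow> nat) \<Rightarrow> (nat \<Rightarrow> nat) \<Rightarrow> complex" where
  "ptrace d p A u v = (\<Sum>a<d. A (u(p := a)) (v(p := a)))"

lemma finite_configs [simp]: "finite B \<Longrightarrow> finite (configs B d)"
  unfolding configs_def by (rule finite_PiE) auto

lemma block_corr_restrict [simp]: "block_corr B d lam A (restrict idx B) = block_corr B d lam A idx"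
  unfolding block_corr_def by simp

lemma tensor_generators_orthogonal:
  assumes g: "generators d lam" and "finite B"
    and x: "x \<in> configs B d" and y: "y \<in> configs B d"
    and x': "x' \<in> configs B d" and y': "y' \<in> configs B d"
  shows "(\<Sum>idx\<in>PiE B (\<lambda>_. {..<d^2}).
            (\<Prod>k\<in>B. lam (idx k) (y k) (x k)) * cnj (\<Prod>k\<in>B. lam (idx k) (y' k) (x' k)))
       = (if x = x' \<and> y = y' then of_nat d ^ card B else 0)"
proof -
  have "(\<Sum>idx\<in>PiE B (\<lambda>_. {..<d^2}).
            (\<Prod>k\<in>B. lam (idx k) (y k) (x k)) * cnj (\<Prod>k\<in>B. lam (idx k) (y' k) (x' k)))
      = (\<Prod>k\<in>B. \<Sum>i<d^2. lam i (y k) (x k) * cnj (lam i (y' k) (x' k)))"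
    using \<open>finite B\<close> by (simp add: prod_sum_PiE prod.distrib)
  also have "\<dots> = (\<Prod>k\<in>B. if y k = y' k \<and> x k = x' k then of_nat d else 0)"
    using x y x' y' by (intro prod.cong refl generators_complete[OF g]) (auto simp: configs_def)
  also have "\<dots> = (if x = x' \<and> y = y' then of_nat d ^ card B else 0)"
  proof (cases "x = x' \<and> y = y'")
    case False
    then obtain k where "k \<in> B" "\<not> (y k = y' k \<and> x k = x' k)"
      using x y x' y' PiE_ext unfolding configs_def by metis
    then have "(\<Prod>k\<in>B. if y k = y' k \<and> x k = x' k then of_nat d else 0) = (0::complex)"
      using \<open>finite B\<close> by (intro prod_zero) auto
    then show ?thesis
      by (simp only: if_not_P[OF False])
  qed simp
  finally show ?thesis .
qed

lemma sum_sq_block_corr_eq_hs_norm_sq: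
  assumes "generators d lam" "finite B"
  shows "(\<Sum>idx\<in>PiE B (\<lambda>_. {..<d^2}). (cmod (block_corr B d lam A idx))^2)
    = real d ^ card B * hs_norm_sq B d A"
proof -
  let ?C = "configs B d"
  define L where "L idx = (\<lambda>(x, y). \<Prod>k\<in>B. lam (idx k) (y k) (x k))" for idx :: "nat \<Rightarrow> nat"
  have blk: "block_corr B d lam A idx = (\<Sum>u\<in>?C \<times> ?C. case_prod A u * L idx u)" for idx
    unfolding block_corr_def L_def by (simp add: sum.cartesian_product case_prod_unfold)
  have hs: "hs_norm_sq B d A = (\<Sum>u\<in>?C \<times> ?C. (cmod (case_prod A u))^2)"
    unfolding hs_norm_sq_def by (simp add: sum.cartesian_product case_prod_unfold)
  have orth: "(\<Sum>idx\<in>PiE B (\<lambda>_. {..<d^2}). L idx u * cnj (L idx v))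
      = (if u = v then of_real (real d ^ card B) else 0)" if "u \<in> ?C \<times> ?C" "v \<in> ?C \<times> ?C" for u v
    using that tensor_generators_orthogonal[OF assms] unfolding L_def
    by (auto simp: case_prod_unfold split: if_split_asm)
  show ?thesis
    unfolding blk hs using assms(2) by (intro sum_norm_sq_orthogonal_transform orth finite_PiE) auto
qed

lemma block_corr_fun_upd_identity:
  assumes g: "generators d lam" and p: "p \<notin> S" and "finite S"
  shows "block_corr (insert p S) d lam A (j(p := 0)) = block_corr S d lam (ptrace d p A) j"
proof -
  define L where "L u v = (\<Prod>k\<in>S. lam (j k) (v k) (u k))" for u v :: "nat \<Rightarrow> nat"
  have site: "(\<Prod>k\<in>insert p S. lam ((j(p := 0)) k) ((v(p := b)) k) ((u(p := a)) k)) = lam 0 b a * L u v"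
    for u v a b
  proof -
    have "(\<Prod>k\<in>S. lam ((j(p := 0)) k) ((v(p := b)) k) ((u(p := a)) k)) = L u v"
      unfolding L_def using p by (intro prod.cong refl) auto
    then show ?thesis
      using p \<open>finite S\<close> by simp
  qed
  have "block_corr (insert p S) d lam A (j(p := 0))
      = (\<Sum>a<d. \<Sum>u\<in>configs S d. \<Sum>b<d. \<Sum>v\<in>configs S d. A (u(p := a)) (v(p := b)) * (lam 0 b a * L u v))"
    unfolding block_corr_def configs_def sum_PiE_insert[OF p] site atLeast0LessThan ..
  also have "\<dots> = (\<Sum>a<d. \<Sum>u\<in>configs S d. \<Sum>v\<in>configs S d. A (u(p := a)) (v(p := a)) * L u v)"
  proof (intro sum.cong refl)
    fix a u assume "a \<in> {..<d}"
    then have "(\<Sum>b<d. \<Sum>v\<in>configs S d. A (u(p := a)) (v(p := b)) * (lam 0 b a * L u v))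
        = (\<Sum>b<d. if b = a then \<Sum>v\<in>configs S d. A (u(p := a)) (v(p := a)) * L u v else 0)"
      by (intro sum.cong refl) (simp add: generators_identity[OF g])
    then show "(\<Sum>b<d. \<Sum>v\<in>configs S d. A (u(p := a)) (v(p := b)) * (lam 0 b a * L u v))
        = (\<Sum>v\<in>configs S d. A (u(p := a)) (v(p := a)) * L u v)"
      using \<open>a \<in> {..<d}\<close> by simp
  qed
  also have "\<dots> = block_corr S d lam (ptrace d p A) j"
    unfolding block_corr_def ptrace_def L_def sum_distrib_right
    by (subst sum.swap, rule sum.cong[OF refl], rule sum.swap)
  finally show ?thesis .
qed

lemma sum_swap_pairs:
  "(\<Sum>u\<in>X. \<Sum>v\<in>X. \<Sum>a\<in>D. \<Sum>b\<in>D. f a b u v) = (\<Sum>a\<in>D. \<Sum>b\<in>D. \<Sum>u\<in>X. \<Sum>v\<in>X. f a b u v)"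
proof -
  have "(\<Sum>u\<in>X. \<Sum>v\<in>X. \<Sum>a\<in>D. \<Sum>b\<in>D. f a b u v) = (\<Sum>u\<in>X. \<Sum>a\<in>D. \<Sum>v\<in>X. \<Sum>b\<in>D. f a b u v)"
    by (rule sum.cong[OF refl], rule sum.swap)
  also have "\<dots> = (\<Sum>a\<in>D. \<Sum>u\<in>X. \<Sum>v\<in>X. \<Sum>b\<in>D. f a b u v)"
    by (rule sum.swap)
  also have "\<dots> = (\<Sum>a\<in>D. \<Sum>u\<in>X. \<Sum>b\<in>D. \<Sum>v\<in>X. f a b u v)"
    by (rule sum.cong[OF refl], rule sum.cong[OF refl], rule sum.swap)
  also have "\<dots> = (\<Sum>a\<in>D. \<Sum>b\<in>D. \<Sum>u\<in>X. \<Sum>v\<in>X. f a b u v)"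
    by (rule sum.cong[OF refl], rule sum.swap)
  finally show ?thesis .
qed

text \<open>With W the d x X matrix w, the right-hand side is the squared Frobenius norm of
  W^T conj W, which equals that of the d x d Gram matrix M = W W^*; the left-hand side is
  (tr M)^2 / d, and (tr M)^2 \<le> d \<Sum>a |M a a|^2 by Cauchy-Schwarz.\<close>
lemma trace_sq_le_frobenius_gram:
  fixes w :: "nat \<Rightarrow> 'x \<Rightarrow> complex"
  assumes "finite X" "0 < d"
  shows "(\<Sum>a<d. \<Sum>u\<in>X. (cmod (w a u))^2)^2 / real d
    \<le> (\<Sum>u\<in>X. \<Sum>v\<in>X. (cmod (\<Sum>a<d. w a u * cnj (w a v)))^2)"
proof -
  define M where "M a b = (\<Sum>u\<in>X. w a u * cnj (w b u))" for a b
  define r where "r a = (\<Sum>u\<in>X. (cmod (w a u))^2)" for a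
  have "complex_of_real (\<Sum>u\<in>X. \<Sum>v\<in>X. (cmod (\<Sum>a<d. w a u * cnj (w a v)))^2)
      = (\<Sum>u\<in>X. \<Sum>v\<in>X. \<Sum>a<d. \<Sum>b<d. w a u * cnj (w b u) * (cnj (w a v) * w b v))"
    by (simp only: of_real_sum complex_norm_square) (simp add: sum_product mult_ac)
  also have "\<dots> = (\<Sum>a<d. \<Sum>b<d. \<Sum>u\<in>X. \<Sum>v\<in>X. w a u * cnj (w b u) * (cnj (w a v) * w b v))"
    by (rule sum_swap_pairs)
  also have "\<dots> = complex_of_real (\<Sum>a<d. \<Sum>b<d. (cmod (M a b))^2)"
    unfolding M_def by (simp only: of_real_sum complex_norm_square) (simp add: sum_product mult_ac)
  finally have frobenius: "(\<Sum>u\<in>X. \<Sum>v\<in>X. (cmod (\<Sum>a<d. w a u * cnj (w a v)))^2)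
      = (\<Sum>a<d. \<Sum>b<d. (cmod (M a b))^2)"
    by (simp only: of_real_eq_iff)
  have diag: "cmod (M a a) = r a" for a
  proof -
    have "M a a = complex_of_real (r a)"
      unfolding M_def r_def by (simp only: of_real_sum complex_norm_square)
    moreover have "0 \<le> r a"
      unfolding r_def by (simp add: sum_nonneg)
    ultimately show ?thesis
      by simp
  qed
  have "(\<Sum>a<d. r a)^2 \<le> (\<Sum>a<d. (r a)^2) * real d"
    using sum_squared_le_sum_of_squares[of r "{..<d}"] by simp
  then have "(\<Sum>a<d. r a)^2 / real d \<le> (\<Sum>a<d. (cmod (M a a))^2)"
    using assms(2) by (simp add: diag divide_simps)
  also have "\<dots> \<le> (\<Sum>a<d. \<Sum>b<d. (cmod (M a b))^2)"
    by (intro sum_mono member_le_sum) auto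
  finally show ?thesis
    unfolding frobenius r_def .
qed

lemma hs_norm_sq_ketbra:
  assumes "unit_state B d psi"
  shows "hs_norm_sq B d (ketbra psi) = 1"
  using assms unfolding hs_norm_sq_def ketbra_def unit_state_def
  by (simp add: norm_mult power_mult_distrib sum_product[symmetric])

lemma hs_norm_sq_ptrace_ketbra_ge:
  assumes p: "p \<notin> S" and "finite S" "0 < d" and unit: "unit_state (insert p S) d psi"
  shows "1 / real d \<le> hs_norm_sq S d (ptrace d p (ketbra psi))"
proof -
  have "(\<Sum>a<d. \<Sum>u\<in>configs S d. (cmod (psi (u(p := a))))^2) = 1"
    using unit unfolding unit_state_def configs_def sum_PiE_insert[OF p] by (simp add: atLeast0LessThan)
  then show ?thesis
    using trace_sq_le_frobenius_gram[of "configs S d" d "\<lambda>a u. psi (u(p := a))"] assms(2,3)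
    unfolding hs_norm_sq_def ptrace_def ketbra_def by simp
qed

lemma sum_block_corr_ketbra_sq_le:
  assumes g: "generators d lam" and "finite B" "p \<in> B" "0 < d" and unit: "unit_state B d psi"
  shows "(\<Sum>idx\<in>PiE B (\<lambda>_. {1..<d^2}). (cmod (block_corr B d lam (ketbra psi) idx))^2)
    \<le> (1 - 1 / real d^2) * real d ^ card B"
proof -
  define S where "S = B - {p}"
  have B: "B = insert p S" and p: "p \<notin> S" and "finite S"
    using assms(2,3) unfolding S_def by auto
  define f where "f idx = (cmod (block_corr B d lam (ketbra psi) idx))^2" for idx
  have split: "(\<Sum>idx\<in>PiE B (\<lambda>_. I). f idx) = (\<Sum>a\<in>I. \<Sum>j\<in>PiE S (\<lambda>_. I). f (j(p := a)))" for I
    unfolding B by (rule sum_PiE_insert[OF p])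
  have "(\<Sum>idx\<in>PiE B (\<lambda>_. {1..<d^2}). f idx) \<le> (\<Sum>a\<in>{1..<d^2}. \<Sum>j\<in>PiE S (\<lambda>_. {..<d^2}). f (j(p := a)))"
    unfolding split using \<open>finite S\<close> by (intro sum_mono sum_mono2 finite_PiE PiE_mono) (auto simp: f_def)
  also have "\<dots> = (\<Sum>idx\<in>PiE B (\<lambda>_. {..<d^2}). f idx) - (\<Sum>j\<in>PiE S (\<lambda>_. {..<d^2}). f (j(p := 0)))"
  proof -
    have "{..<d^2} = insert 0 {1..<d^2}" using \<open>0 < d\<close> by auto
    then show ?thesis unfolding split by simp
  qed
  also have "(\<Sum>idx\<in>PiE B (\<lambda>_. {..<d^2}). f idx) = real d ^ card B"
    unfolding f_def using sum_sq_block_corr_eq_hs_norm_sq[OF g \<open>finite B\<close>] hs_norm_sq_ketbra[OF unit] by simp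
  also have "(\<Sum>j\<in>PiE S (\<lambda>_. {..<d^2}). f (j(p := 0))) = real d ^ card S * hs_norm_sq S d (ptrace d p (ketbra psi))"
    unfolding f_def B block_corr_fun_upd_identity[OF g p \<open>finite S\<close>] by (rule sum_sq_block_corr_eq_hs_norm_sq[OF g \<open>finite S\<close>])
  also have "real d ^ card B - \<dots> \<le> real d ^ card B - real d ^ card S / real d"
    using mult_left_mono[OF hs_norm_sq_ptrace_ketbra_ge[OF p \<open>finite S\<close> \<open>0 < d\<close> unit[unfolded B]],
        of "real d ^ card S"]
    by simp
  also have "\<dots> = (1 - 1 / real d^2) * real d ^ card B"
    using \<open>finite S\<close> p \<open>0 < d\<close> unfolding B by (simp add: field_simps power2_eq_square)
  finally show ?thesis
    unfolding f_def .
qed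

lemma block_corr_ketbra_product:
  assumes P: "partition_on I P" and "finite I"
    and psi: "\<forall>x\<in>configs I d. psi x = (\<Prod>B\<in>P. phi B (restrict x B))"
  shows "block_corr I d lam (ketbra psi) idx = (\<Prod>B\<in>P. block_corr B d lam (ketbra (phi B)) idx)"
proof -
  have I: "I = \<Union>P" and "disjoint P" and "finite P"
    using partition_onD1[OF P] partition_onD2[OF P] finite_elements[OF \<open>finite I\<close> P] by auto
  have "finite B" if "B \<in> P" for B
    using that \<open>finite I\<close> I by (metis Union_upper finite_subset)
  define h where "h B x y = ketbra (phi B) x y * (\<Prod>k\<in>B. lam (idx k) (y k) (x k))"
    for B and x y :: "nat \<Rightarrow> nat"
  have summand: "ketbra psi x y * (\<Prod>k\<in>I. lam (idx k) (y k) (x k)) = (\<Prod>B\<in>P. h B (restrict x B) (restrict y B))"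
    if "x \<in> configs I d" "y \<in> configs I d" for x y
  proof -
    have "(\<Prod>k\<in>I. lam (idx k) (y k) (x k)) = (\<Prod>B\<in>P. \<Prod>k\<in>B. lam (idx k) (restrict y B k) (restrict x B k))"
      unfolding I using \<open>disjoint P\<close> \<open>\<And>B. B \<in> P \<Longrightarrow> finite B\<close>
      by (subst prod.Union_disjoint) (auto simp: disjoint_def intro!: prod.cong)
    then show ?thesis
      using that psi unfolding h_def ketbra_def by (simp add: prod.distrib)
  qed
  have "block_corr I d lam (ketbra psi) idx
      = (\<Sum>x\<in>PiE (\<Union>P) (\<lambda>_. {0..<d}). \<Sum>y\<in>PiE (\<Union>P) (\<lambda>_. {0..<d}). \<Prod>B\<in>P. h B (restrict x B) (restrict y B))"
    unfolding block_corr_def using summand by (simp add: configs_def I)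
  also have "\<dots> = (\<Sum>x\<in>PiE (\<Union>P) (\<lambda>_. {0..<d}). \<Prod>B\<in>P. \<Sum>y\<in>PiE B (\<lambda>_. {0..<d}). h B (restrict x B) y)"
    using \<open>finite P\<close> \<open>disjoint P\<close> by (intro sum.cong refl sum_PiE_prod_restrict)
  also have "\<dots> = (\<Prod>B\<in>P. \<Sum>x\<in>PiE B (\<lambda>_. {0..<d}). \<Sum>y\<in>PiE B (\<lambda>_. {0..<d}). h B x y)"
    using \<open>finite P\<close> \<open>disjoint P\<close> by (rule sum_PiE_prod_restrict)
  finally show ?thesis
    unfolding h_def block_corr_def configs_def .
qed

lemma tau_sq_eq:
  "tau_sq n d lam rho
    = (\<Sum>idx\<in>PiE {0..<n} (\<lambda>_. {1..<d^2}). (cmod (block_corr {0..<n} d lam rho idx))^2)"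
  unfolding tau_sq_def corr_def block_corr_def by (simp add: lessThan_atLeast0)

lemma tau_sq_pure_k_separable_le:
  assumes g: "generators d lam" and "0 < d" and "pure_k_separable n d k psi"
  shows "tau_sq n d lam (ketbra psi) \<le> (1 - 1 / real d^2) ^ k * real d ^ n"
proof -
  obtain P phi where P: "partition_on {0..<n} P" and "card P = k"
    and unit: "\<forall>B\<in>P. unit_state B d (phi B)"
    and psi: "\<forall>x\<in>configs {0..<n} d. psi x = (\<Prod>B\<in>P. phi B (restrict x B))"
    using assms(3) unfolding pure_k_separable_def by blast
  have U: "\<Union>P = {0..<n}" and "disjoint P" and "finite P" and "{} \<notin> P"
    using partition_onD1[OF P] partition_onD2[OF P] partition_onD3[OF P]
      finite_elements[OF finite_atLeastLessThan P]
    by auto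
  have fin: "finite B" if "B \<in> P" for B
    using that U by (metis Union_upper finite_atLeastLessThan finite_subset)
  define c where "c B idx = (cmod (block_corr B d lam (ketbra (phi B)) idx))^2" for B idx
  have "tau_sq n d lam (ketbra psi) = (\<Sum>idx\<in>PiE (\<Union>P) (\<lambda>_. {1..<d^2}). \<Prod>B\<in>P. c B (restrict idx B))"
    unfolding tau_sq_eq block_corr_ketbra_product[OF P finite_atLeastLessThan psi] c_def U
    by (simp add: prod_norm[symmetric] prod_power_distrib)
  also have "\<dots> = (\<Prod>B\<in>P. \<Sum>idx\<in>PiE B (\<lambda>_. {1..<d^2}). c B idx)"
    using \<open>finite P\<close> \<open>disjoint P\<close> by (rule sum_PiE_prod_restrict)
  also have "\<dots> \<le> (\<Prod>B\<in>P. (1 - 1 / real d^2) * real d ^ card B)"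
  proof (intro prod_mono conjI)
    fix B assume "B \<in> P"
    then obtain p where "p \<in> B" using \<open>{} \<notin> P\<close> by (metis all_not_in_conv)
    show "(\<Sum>idx\<in>PiE B (\<lambda>_. {1..<d^2}). c B idx) \<le> (1 - 1 / real d^2) * real d ^ card B"
      unfolding c_def using sum_block_corr_ketbra_sq_le[OF g fin \<open>p \<in> B\<close> \<open>0 < d\<close>] unit \<open>B \<in> P\<close> by blast
  qed (simp add: c_def sum_nonneg)
  also have "\<dots> = (1 - 1 / real d^2) ^ k * real d ^ (\<Sum>B\<in>P. card B)"
    using \<open>card P = k\<close> by (simp add: prod.distrib power_sum)
  also have "(\<Sum>B\<in>P. card B) = n"
    using card_Union_disjoint[of P] \<open>disjoint P\<close> fin U by (simp add: pairwise_def disjnt_def disjoint_def)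
  finally show ?thesis .
qed

lemma norm_convex_combination_sq_le:
  fixes z :: "'a \<Rightarrow> 'b::real_normed_vector"
  assumes p: "\<And>j. j \<in> J \<Longrightarrow> 0 \<le> p j" and "sum p J = 1"
  shows "(norm (\<Sum>j\<in>J. p j *\<^sub>R z j))^2 \<le> (\<Sum>j\<in>J. p j * (norm (z j))^2)"
proof -
  have "norm (\<Sum>j\<in>J. p j *\<^sub>R z j) \<le> (\<Sum>j\<in>J. p j * norm (z j))"
    using p by (intro order_trans[OF norm_sum] sum_mono) simp
  then have "(norm (\<Sum>j\<in>J. p j *\<^sub>R z j))^2 \<le> (\<Sum>j\<in>J. sqrt (p j) * (sqrt (p j) * norm (z j)))^2"
    using p by (intro power_mono) (simp_all add: mult.assoc[symmetric])
  also have "\<dots> \<le> (\<Sum>j\<in>J. (sqrt (p j))^2) * (\<Sum>j\<in>J. (sqrt (p j) * norm (z j))^2)"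
    by (rule Cauchy_Schwarz_ineq_sum)
  also have "\<dots> = (\<Sum>j\<in>J. p j * (norm (z j))^2)"
    using assms by (simp add: power_mult_distrib)
  finally show ?thesis .
qed

lemma tau_sq_k_separable_le:
  assumes g: "generators d lam" and "0 < d" and "k_separable n d k rho"
  shows "tau_sq n d lam rho \<le> (1 - 1 / real d^2) ^ k * real d ^ n"
proof -
  obtain m :: nat and p psi where mix: "\<forall>j<m. 0 \<le> p j \<and> pure_k_separable n d k (psi j)"
    and "(\<Sum>j<m. p j) = 1"
    and rho: "\<forall>x\<in>configs {0..<n} d. \<forall>y\<in>configs {0..<n} d.
      rho x y = (\<Sum>j<m. complex_of_real (p j) * psi j x * cnj (psi j y))"
    using assms(3) unfolding k_separable_def by blast
  let ?I = "PiE {0..<n} (\<lambda>_. {1..<d^2})"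
  define c where "c j idx = block_corr {0..<n} d lam (ketbra (psi j)) idx" for j idx
  have mixture: "block_corr {0..<n} d lam rho idx = (\<Sum>j<m. p j *\<^sub>R c j idx)" for idx
  proof -
    have "block_corr {0..<n} d lam rho idx = (\<Sum>x\<in>configs {0..<n} d. \<Sum>y\<in>configs {0..<n} d.
        \<Sum>j<m. p j *\<^sub>R (ketbra (psi j) x y * (\<Prod>k\<in>{0..<n}. lam (idx k) (y k) (x k))))"
      unfolding block_corr_def using rho
      by (intro sum.cong refl) (simp add: sum_distrib_right ketbra_def scaleR_conv_of_real mult.assoc)
    then show ?thesis
      unfolding c_def block_corr_def by (simp add: scaleR_sum_right sum.swap[of _ "{..<m}"])
  qed
  have "tau_sq n d lam rho \<le> (\<Sum>idx\<in>?I. \<Sum>j<m. p j * (cmod (c j idx))^2)"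
    unfolding tau_sq_eq mixture using mix \<open>(\<Sum>j<m. p j) = 1\<close>
    by (intro sum_mono norm_convex_combination_sq_le) auto
  also have "\<dots> = (\<Sum>j<m. p j * tau_sq n d lam (ketbra (psi j)))"
    unfolding tau_sq_eq c_def by (subst sum.swap) (simp add: sum_distrib_left)
  also have "\<dots> \<le> (\<Sum>j<m. p j * ((1 - 1 / real d^2) ^ k * real d ^ n))"
    using mix by (intro sum_mono mult_left_mono tau_sq_pure_k_separable_le[OF g \<open>0 < d\<close>]) auto
  also have "\<dots> = (1 - 1 / real d^2) ^ k * real d ^ n"
    using \<open>(\<Sum>j<m. p j) = 1\<close> by (simp add: sum_distrib_right[symmetric])
  finally show ?thesis .
qed

lemma ceiling_nat_divide:
  assumes "0 < k"
  shows "\<lceil>real n / real k\<rceil> = int (n div k) + of_bool (n mod k \<noteq> 0)"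
proof -
  have n: "real n / real k = real (n div k) + real (n mod k) / real k"
    using assms by (simp add: field_simps flip: of_nat_mult of_nat_add)
  have "0 \<le> real (n mod k) / real k" "real (n mod k) / real k < 1"
    using assms by simp_all
  then show ?thesis
    unfolding n using assms by (cases "n mod k = 0") (auto simp: ceiling_eq_iff)
qed

lemma powr_floor_ceiling_blocks:
  fixes n k :: nat and D :: real
  assumes "0 < k" "0 < D"
  defines "R \<equiv> n - k * nat \<lfloor>real n / real k\<rfloor>"
  shows "(D powr (real_of_int \<lceil>real n / real k\<rceil> - 2)) ^ R
       * (D powr (real_of_int \<lfloor>real n / real k\<rfloor> - 2)) ^ (k - R) = D ^ n / D ^ (2 * k)"
proof -
  have floor: "\<lfloor>real n / real k\<rfloor> = int (n div k)"
    using floor_divide_of_nat_eq[of n k] by simp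
  have R: "R = n mod k"
    unfolding R_def floor by (simp add: minus_mult_div_eq_mod)
  have "(D powr (real_of_int \<lceil>real n / real k\<rceil> - 2)) ^ R
       * (D powr (real_of_int \<lfloor>real n / real k\<rfloor> - 2)) ^ (k - R)
      = D powr (real R * (real_of_int \<lceil>real n / real k\<rceil> - 2) + real (k - R) * (real (n div k) - 2))"
    using assms(2) by (simp add: powr_power powr_add floor)
  also have "real R * (real_of_int \<lceil>real n / real k\<rceil> - 2) + real (k - R) * (real (n div k) - 2)
      = real n - real (2 * k)"
  proof -
    have "real n = real k * real (n div k) + real R"
      unfolding R by (simp flip: of_nat_mult of_nat_add)
    moreover have "R < k" "of_bool (R \<noteq> 0) * real R = real R"
      unfolding R using assms(1) by auto
    ultimately show ?thesis
      unfolding ceiling_nat_divide[OF assms(1)] R[symmetric] by (simp add: algebra_simps)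
  qed
  also have "D powr (real n - real (2 * k)) = D ^ n / D ^ (2 * k)"
    unfolding powr_diff powr_realpow[OF assms(2)] ..
  finally show ?thesis .
qed

theorem theorem1:
  fixes n d k :: nat
    and lam :: "nat \<Rightarrow> nat \<Rightarrow> nat \<Rightarrow> complex"
    and rho :: "(nat \<Rightarrow> nat) \<Rightarrow> (nat \<Rightarrow> nat) \<Rightarrow> complex"
  assumes "n \<ge> 1" and "d \<ge> 2" and "1 \<le> k" and "k \<le> n"
    and "generators d lam"
    and "k_separable n d k rho"
  defines "R \<equiv> n - k * nat \<lfloor>real n / real k\<rfloor>"
  shows "sqrt (tau_sq n d lam rho)
    \<le> sqrt ((real d ^ 2 - 1) ^ k
         * (real d powr (real_of_int \<lceil>real n / real k\<rceil> - 2)) ^ R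
         * (real d powr (real_of_int \<lfloor>real n / real k\<rfloor> - 2)) ^ (k - R))"
proof -
  have "0 < d" using \<open>d \<ge> 2\<close> by simp
  have "tau_sq n d lam rho \<le> (1 - 1 / real d^2) ^ k * real d ^ n"
    using tau_sq_k_separable_le[OF \<open>generators d lam\<close> \<open>0 < d\<close> \<open>k_separable n d k rho\<close>] .
  also have "\<dots> = (real d ^ 2 - 1) ^ k * (real d ^ n / real d ^ (2 * k))"
  proof -
    have "1 - 1 / real d^2 = (real d ^ 2 - 1) / real d^2"
      using \<open>0 < d\<close> by (simp add: field_simps)
    then show ?thesis
      by (simp add: power_divide power_mult)
  qed
  also have "\<dots> = (real d ^ 2 - 1) ^ k
         * (real d powr (real_of_int \<lceil>real n / real k\<rceil> - 2)) ^ R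
         * (real d powr (real_of_int \<lfloor>real n / real k\<rfloor> - 2)) ^ (k - R)"
    using powr_floor_ceiling_blocks[of k "real d" n] \<open>1 \<le> k\<close> \<open>0 < d\<close> unfolding R_def by (simp add: mult.assoc)
  finally show ?thesis
    by (rule real_sqrt_le_mono)
qed

end
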